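(* Let $\gamma:[0,1]\to\mathbb{R}^2$ be a $C^1$ curve of constant speed $c>0$ with $\gamma(0)\neq\gamma(1)$, whose turning angle function $\theta$ satisfies $\theta(1)-\theta(0)=2\pi m$ with $0\neq m\in\mathbb{Z}$. Let $k\ge 2$ and $z_h\in Z_k$. Then there are no cuts $C\in D_k$ such that $r_{z_h,C}$ is closed, i.e. $r_{z_h,C}(0)\neq r_{z_h,C}(1)$ for all $C\in D_k$.
   Context: A turning angle function is a continuous $\theta$ with $\gamma'(s)=c(\cos\theta(s),\sin\theta(s))$. Concatenation $\alpha*\beta$ of two $C^1$ planar curves of the same constant speed ($\alpha$ on $[a_1,b_1]$, $\beta$ on $[a_2,b_2]$) is the curve on $[0,(b_1-a_1)+(b_2-a_2)]$ equal to $\alpha(s+a_1)$ for $s\le b_1-a_1$ and to $T(\beta(s-(b_1-a_1)+a_2))$ afterwards, where $T$ is the orientation-preserving rigid motion sending $\beta(a_2)$ to $\alpha(b_1)$ and the unit tangent of $\beta$ at $a_2$ to that of $\alpha$ at $b_1$; it is associative. Let $D_k=\{(c_1,\dots,c_{k-1})\in[0,1]^{k-1}: 0\le c_1\le\dots\le c_{k-1}\le 1\}$; set $c_0=0$, $c_k=1$. For $C\in D_k$ let $\gamma_i$ be the restriction of $\gamma$ to $[c_{i-1},c_i]$ (a degenerate arc is a point carrying the tangent direction of $\gamma$ there). For $\sigma\in S_k$, $r_{\sigma,C}:=\gamma_{\sigma(1)}*\dots*\gamma_{\sigma(k)}$ parametrized over $[0,1]$. $Z_k=\{z_0,\dots,z_{k-1}\}$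 with $z_h(i)=i+h$ if $i\le k-h$ and $z_h(i)=i+h-k$ if $i>k-h$. *)

theory Defs
  imports "HOL-Analysis.Analysis"
begin

text \<open>Planar curves are modelled as complex-valued functions (complex plane = R^2).
  An arc is a tuple (f, u, a, b): the curve f restricted to [a,b], together with its
  unit tangent function u (so a degenerate arc a = b still carries a tangent direction).\<close>

type_synonym arc = "(real \<Rightarrow> complex) \<times> (real \<Rightarrow> complex) \<times> real \<times> real"

definition turning_angle :: "(real \<Rightarrow> complex) \<Rightarrow> real \<Rightarrow> (real \<Rightarrow> real) \<Rightarrow> bool" where
  "turning_angle \<gamma> c \<theta> \<longleftrightarrow> continuous_on {0..1} \<theta> \<and>
     (\<forall>s\<in>{0..1}. (\<gamma> has_vector_derivative (complex_of_real c * cis (\<theta> s))) (at s within {0..1}))"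

text \<open>Concatenation: the second arc is moved by the orientation-preserving rigid motion
  z \<mapsto> f1 b1 + rot * (z - f2 a2), rot = u1 b1 / u2 a2 (a unit complex number), sending
  the start point and start tangent of the second arc to the end point and end tangent of the first.\<close>
definition concat_arc :: "arc \<Rightarrow> arc \<Rightarrow> arc" where
  "concat_arc A B = (case A of (f1, u1, a1, b1) \<Rightarrow> case B of (f2, u2, a2, b2) \<Rightarrow>
     (let L1 = b1 - a1; L2 = b2 - a2; rot = u1 b1 / u2 a2;
          T = (\<lambda>z. f1 b1 + rot * (z - f2 a2))
      in ((\<lambda>s. if s \<le> L1 then f1 (s + a1) else T (f2 (s - L1 + a2))),
          (\<lambda>s. if s \<le> L1 then u1 (s + a1) else rot * u2 (s - L1 + a2)),
          0, L1 + L2)))"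

fun concat_list :: "arc list \<Rightarrow> arc" where
  "concat_list [] = ((\<lambda>_. 0), (\<lambda>_. 1), 0, 0)"
| "concat_list [A] = A"
| "concat_list (A # B # As) = concat_arc A (concat_list (B # As))"

text \<open>D_k: cuts C with 0 \<le> C 1 \<le> ... \<le> C (k-1) \<le> 1 (only indices 1..k-1 matter).\<close>
definition cuts :: "nat \<Rightarrow> (nat \<Rightarrow> real) set" where
  "cuts k = {C. \<forall>i j. 1 \<le> i \<longrightarrow> i \<le> j \<longrightarrow> j \<le> k - 1 \<longrightarrow> 0 \<le> C i \<and> C i \<le> C j \<and> C j \<le> 1}"

definition cut_pt :: "(nat \<Rightarrow> real) \<Rightarrow> nat \<Rightarrow> nat \<Rightarrow> real" where
  "cut_pt C k i = (if i = 0 then 0 else if i \<ge> k then 1 else C i)"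

definition arc_piece :: "(real \<Rightarrow> complex) \<Rightarrow> (real \<Rightarrow> real) \<Rightarrow> (nat \<Rightarrow> real) \<Rightarrow> nat \<Rightarrow> nat \<Rightarrow> arc" where
  "arc_piece \<gamma> \<theta> C k i = (\<gamma>, (\<lambda>s. cis (\<theta> s)), cut_pt C k (i - 1), cut_pt C k i)"

definition r_perm :: "(real \<Rightarrow> complex) \<Rightarrow> (real \<Rightarrow> real) \<Rightarrow> (nat \<Rightarrow> nat) \<Rightarrow> nat \<Rightarrow> (nat \<Rightarrow> real) \<Rightarrow> real \<Rightarrow> complex" where
  "r_perm \<gamma> \<theta> \<sigma> k C = (case concat_list (map (\<lambda>j. arc_piece \<gamma> \<theta> C k (\<sigma> j)) [1..<k+1]) of
      (g, v, a, b) \<Rightarrow> (\<lambda>s. g (a + s * (b - a))))"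

definition zshift :: "nat \<Rightarrow> nat \<Rightarrow> nat \<Rightarrow> nat" where
  "zshift k h i = (if i \<le> k - h then i + h else i + h - k)"

end

theory Submission
  imports Defs
begin

text \<open>Measure every arc relative to its initial tangent: the quotients of its final tangent and
  of its displacement by the initial tangent are invariant under rigid motions and compose under
  concatenation exactly like the passage between frames (a point together with a direction).
  The piece \<gamma>_i carries the frame (\<gamma> t, cis (\<theta> t)) at t = c_(i-1) to the one at t = c_i.
  Since \<theta> 1 - \<theta> 0 is a multiple of 2\<pi>, the frame at 1 is the frame at 0 translated by
  \<gamma> 1 - \<gamma> 0, so the cyclic shift \<gamma>_(h+1) * ... * \<gamma>_k * \<gamma>_1 * ... * \<gamma>_h carries the
  frame at c_h to its translate by \<gamma> 1 - \<gamma> 0. Hence the endpoints of r differ by a rotated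
  copy of \<gamma> 1 - \<gamma> 0, which is nonzero.\<close>

type_synonym frame = "complex \<times> complex"

definition carries_frame :: "arc \<Rightarrow> frame \<Rightarrow> frame \<Rightarrow> bool" where
  "carries_frame A X Y \<longleftrightarrow> (case A of (f, u, a, b) \<Rightarrow> case X of (P, U) \<Rightarrow> case Y of (Q, V) \<Rightarrow>
     a \<le> b \<and> U \<noteq> 0 \<and> u a \<noteq> 0 \<and> u b / u a = V / U \<and> (f b - f a) / u a = (Q - P) / U)"

lemma carries_frame_concat_arc:
  assumes "carries_frame A X Y" and "carries_frame B Y Z"
  shows "carries_frame (concat_arc A B) X Z"
proof -
  obtain f1 u1 a1 b1 where A: "A = (f1, u1, a1, b1)" by (cases A) auto
  obtain f2 u2 a2 b2 where B: "B = (f2, u2, a2, b2)" by (cases B) auto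
  obtain P U where X: "X = (P, U)" by (cases X)
  obtain Q V where Y: "Y = (Q, V)" by (cases Y)
  obtain R W where Z: "Z = (R, W)" by (cases Z)
  have A_frame: "a1 \<le> b1" "U \<noteq> 0" "u1 a1 \<noteq> 0" "u1 b1 / u1 a1 = V / U"
    "(f1 b1 - f1 a1) / u1 a1 = (Q - P) / U"
    using assms(1) by (auto simp: carries_frame_def A X Y)
  have B_frame: "a2 \<le> b2" "V \<noteq> 0" "u2 a2 \<noteq> 0" "u2 b2 / u2 a2 = W / V"
    "(f2 b2 - f2 a2) / u2 a2 = (R - Q) / V"
    using assms(2) by (auto simp: carries_frame_def B Y Z)
  show ?thesis
  proof (cases "b2 = a2")
    case True
    then have "W = V" "R = Q" using B_frame by (auto simp: field_simps)
    then show ?thesis using A_frame True by (simp add: carries_frame_def A B X Z concat_arc_def Let_def)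
  next
    case False
    define rot where "rot = u1 b1 / u2 a2"
    have rot: "rot / u1 a1 = (V / U) / u2 a2"
      using A_frame(3,4) B_frame(3) by (simp add: rot_def field_simps)
    have turn: "rot * u2 b2 / u1 a1 = W / U"
    proof -
      have "rot * u2 b2 / u1 a1 = (rot / u1 a1) * u2 b2" by simp
      also have "\<dots> = (V / U) * (u2 b2 / u2 a2)" unfolding rot by simp
      finally show ?thesis using B_frame(2,4) by simp
    qed
    have shift: "(f1 b1 + rot * (f2 b2 - f2 a2) - f1 a1) / u1 a1 = (R - P) / U"
    proof -
      have "(f1 b1 + rot * (f2 b2 - f2 a2) - f1 a1) / u1 a1
          = (f1 b1 - f1 a1) / u1 a1 + (rot / u1 a1) * (f2 b2 - f2 a2)"
        by (simp add: diff_divide_distrib add_divide_distrib)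
      also have "\<dots> = (f1 b1 - f1 a1) / u1 a1 + (V / U) * ((f2 b2 - f2 a2) / u2 a2)"
        unfolding rot by simp
      also have "\<dots> = (R - P) / U"
        unfolding A_frame(5) B_frame(5) using A_frame(2) B_frame(2) by (simp add: field_simps)
      finally show ?thesis .
    qed
    have "\<not> b1 - a1 + (b2 - a2) \<le> b1 - a1" using False B_frame(1) by auto
    then show ?thesis using A_frame B_frame turn shift
      by (simp add: carries_frame_def A B X Z concat_arc_def Let_def rot_def)
  qed
qed

lemma carries_frame_concat_list:
  assumes "As \<noteq> []" and "\<And>i. i < length As \<Longrightarrow> carries_frame (As ! i) (X i) (X (Suc i))"
  shows "carries_frame (concat_list As) (X 0) (X (length As))"
  using assms
proof (induction As arbitrary: X rule: concat_list.induct)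
  case 1
  then show ?case by simp
next
  case (2 A)
  then show ?case by fastforce
next
  case (3 A B As)
  have "carries_frame (concat_list (B # As)) (X 1) (X (length (A # B # As)))"
    using "3.IH"[of "\<lambda>i. X (Suc i)"] "3.prems"(2) by fastforce
  moreover have "carries_frame A (X 0) (X 1)" using "3.prems"(2)[of 0] by simp
  ultimately show ?case by (simp add: carries_frame_concat_arc)
qed

lemma carries_frame_translate:
  assumes "carries_frame A (P, U) (Q, V)"
  shows "carries_frame A (P + w, U) (Q + w, V)"
  using assms by (cases A) (simp add: carries_frame_def)

lemma carries_frame_endpoints_differ:
  assumes "carries_frame (g, v, a, b) (P, U) (Q, V)" and "P \<noteq> Q"
  shows "g a \<noteq> g b"
  using assms by (auto simp: carries_frame_def)

lemma cut_pt_mono: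
  assumes "C \<in> cuts k" and "i \<le> j"
  shows "cut_pt C k i \<le> cut_pt C k j"
proof -
  have "\<And>i j. 1 \<le> i \<Longrightarrow> i \<le> j \<Longrightarrow> j \<le> k - 1 \<Longrightarrow> 0 \<le> C i \<and> C i \<le> C j \<and> C j \<le> 1"
    using assms(1) unfolding cuts_def by blast
  from this[of i j] this[of i i] this[of j j] show ?thesis
    using assms(2) by (auto simp: cut_pt_def)
qed

lemma arc_piece_carries_frame:
  assumes "C \<in> cuts k" and "1 \<le> j"
  shows "carries_frame (arc_piece \<gamma> \<theta> C k j)
           (\<gamma> (cut_pt C k (j - 1)), cis (\<theta> (cut_pt C k (j - 1))))
           (\<gamma> (cut_pt C k j), cis (\<theta> (cut_pt C k j)))"
  using cut_pt_mono[OF assms(1), of "j - 1" j] by (simp add: arc_piece_def carries_frame_def)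

text \<open>The frame reached by r_(z_h,C) after its first j pieces. Past the wrap-around at
  j = k - h the frames of \<gamma> are translated by \<gamma> 1 - \<gamma> 0; both branches agree at j = k - h
  as soon as cis (\<theta> 1) = cis (\<theta> 0).\<close>
definition zshift_frame ::
    "(real \<Rightarrow> complex) \<Rightarrow> (real \<Rightarrow> real) \<Rightarrow> (nat \<Rightarrow> real) \<Rightarrow> nat \<Rightarrow> nat \<Rightarrow> nat \<Rightarrow> frame" where
  "zshift_frame \<gamma> \<theta> C k h j = (if j \<le> k - h
     then (\<gamma> (cut_pt C k (j + h)), cis (\<theta> (cut_pt C k (j + h))))
     else (\<gamma> (cut_pt C k (j + h - k)) + (\<gamma> 1 - \<gamma> 0), cis (\<theta> (cut_pt C k (j + h - k)))))"

lemma zshift_piece_carries_frame: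
  assumes "C \<in> cuts k" and "h < k" and "cis (\<theta> 1) = cis (\<theta> 0)" and "i < k"
  shows "carries_frame (arc_piece \<gamma> \<theta> C k (zshift k h (Suc i)))
           (zshift_frame \<gamma> \<theta> C k h i) (zshift_frame \<gamma> \<theta> C k h (Suc i))"
proof (cases "Suc i \<le> k - h")
  case True
  then show ?thesis
    using arc_piece_carries_frame[OF assms(1), of "Suc i + h" \<gamma> \<theta>]
    by (simp add: zshift_frame_def zshift_def)
next
  case False
  have "zshift_frame \<gamma> \<theta> C k h i
      = (\<gamma> (cut_pt C k (i + h - k)) + (\<gamma> 1 - \<gamma> 0), cis (\<theta> (cut_pt C k (i + h - k))))"
    using False assms(2-4) by (cases "i = k - h") (auto simp: zshift_frame_def cut_pt_def)
  then show ?thesis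
    using False carries_frame_translate[OF arc_piece_carries_frame[OF assms(1), of "Suc i + h - k"]]
    by (simp add: zshift_frame_def zshift_def Suc_diff_le)
qed

lemma zshift_concat_carries_frame:
  assumes "C \<in> cuts k" and "h < k" and "cis (\<theta> 1) = cis (\<theta> 0)"
  shows "carries_frame (concat_list (map (\<lambda>j. arc_piece \<gamma> \<theta> C k (zshift k h j)) [1..<k+1]))
           (\<gamma> (cut_pt C k h), cis (\<theta> (cut_pt C k h)))
           (\<gamma> (cut_pt C k h) + (\<gamma> 1 - \<gamma> 0), cis (\<theta> (cut_pt C k h)))"
proof -
  define As where "As = map (\<lambda>j. arc_piece \<gamma> \<theta> C k (zshift k h j)) [1..<k+1]"
  have "length As = k" by (simp add: As_def)
  moreover have "As \<noteq> []" using assms(2) by (simp add: As_def)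
  moreover have "carries_frame (As ! i) (zshift_frame \<gamma> \<theta> C k h i) (zshift_frame \<gamma> \<theta> C k h (Suc i))"
    if "i < length As" for i
    using that zshift_piece_carries_frame[OF assms, of i]
    by (simp add: As_def nth_map_upt del: upt_Suc)
  ultimately have "carries_frame (concat_list As)
      (zshift_frame \<gamma> \<theta> C k h 0) (zshift_frame \<gamma> \<theta> C k h k)"
    using carries_frame_concat_list[of As "zshift_frame \<gamma> \<theta> C k h"] by simp
  moreover have "zshift_frame \<gamma> \<theta> C k h k
      = (\<gamma> (cut_pt C k h) + (\<gamma> 1 - \<gamma> 0), cis (\<theta> (cut_pt C k h)))"
    using assms(2,3) by (cases "h = 0") (auto simp: zshift_frame_def cut_pt_def)
  ultimately show ?thesis by (simp add: zshift_frame_def As_def)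
qed

theorem lemma4p2:
  fixes \<gamma> :: "real \<Rightarrow> complex" and \<theta> :: "real \<Rightarrow> real" and c :: real
    and m :: int and k h :: nat and C :: "nat \<Rightarrow> real"
  assumes "\<gamma> C1_differentiable_on {0..1}"
    and "c > 0"
    and "turning_angle \<gamma> c \<theta>"
    and "\<gamma> 0 \<noteq> \<gamma> 1"
    and "\<theta> 1 - \<theta> 0 = 2 * pi * of_int m"
    and "m \<noteq> 0"
    and "k \<ge> 2"
    and "h < k"
    and "C \<in> cuts k"
  shows "r_perm \<gamma> \<theta> (zshift k h) k C 0 \<noteq> r_perm \<gamma> \<theta> (zshift k h) k C 1"
proof -
  have "\<theta> 1 = \<theta> 0 + 2 * pi * of_int m" using assms(5) by simp
  then have "cis (\<theta> 1) = cis (\<theta> 0)" by (simp add: cis_mult[symmetric])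
  from zshift_concat_carries_frame[OF assms(9,8) this]
  obtain g v a b where
    r: "concat_list (map (\<lambda>j. arc_piece \<gamma> \<theta> C k (zshift k h j)) [1..<k+1]) = (g, v, a, b)"
    and carries: "carries_frame (g, v, a, b) (\<gamma> (cut_pt C k h), cis (\<theta> (cut_pt C k h)))
           (\<gamma> (cut_pt C k h) + (\<gamma> 1 - \<gamma> 0), cis (\<theta> (cut_pt C k h)))"
    by (metis prod_cases4)
  have "\<gamma> (cut_pt C k h) \<noteq> \<gamma> (cut_pt C k h) + (\<gamma> 1 - \<gamma> 0)" using assms(4) by simp
  with carries have "g a \<noteq> g b" by (rule carries_frame_endpoints_differ)
  then show ?thesis unfolding r_perm_def r by simp
qed

end
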